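(* There is an absolute constant $C>0$ with the following property. Let $\epsilon\in(0,1/2]$ with $1/\epsilon$ an integer, and let $\delta\in(0,1/2)$. Let $s\ge C\epsilon^{-1}\ln(1/(\epsilon\delta))$ be an integer. Let $t\ge 1$ and let $x=(x_1,\dots,x_t)$ be a vector of positive weights, where item $i$ has weight $x_i$. Let $S\subseteq[t]$ be a weighted random sample without replacement of size $\min\{t,s\}$ from the items $1,\dots,t$ with weights $x_1,\dots,x_t$. Let $$T=\{i\in[t]: x_i\ge\epsilon\|x_{\mathrm{tail}(1/\epsilon)}\|_1\}.$$ Then: - $|T|\le 2/\epsilon$; - $\Pr[T\subseteq S]\ge 1-\delta$; - whenever $T\subseteq S$, the $\min\{|S|,2/\epsilon\}$ elements of $S$ with largest weights, ties broken arbitrarily, contain $T$.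
   Context: For $x\in\mathbb{R}^t$ and an integer $m\ge 0$, $x_{\mathrm{tail}(m)}$ is the vector equal to $x$ except that its $m$ largest coordinates (in absolute value, ties broken arbitrarily) are set to $0$. **Weighted sampling without replacement.** A single weighted random sample from a finite collection of items with positive weights is one item, where an item of weight $w$ is chosen with probability $w$ divided by the total weight. A weighted random sample without replacement of size $m$ is produced as follows: start with $S=\emptyset$; for $i=1,\dots,m$, draw a single weighted random sample from the items not yet in $S$ and add it to $S$. *)

theory Defs
  imports "HOL-Probability.Probability"
begin

definition wsample :: "(nat \<Rightarrow> real) \<Rightarrow> nat set \<Rightarrow> nat pmf" where
  "wsample x B = embed_pmf (\<lambda>i. if i \<in> B then x i / (\<Sum>j\<in>B. x j) else 0)"

fun wswor :: "(nat \<Rightarrow> real) \<Rightarrow> nat set \<Rightarrow> nat \<Rightarrow> nat set pmf" where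
  "wswor x A 0 = return_pmf {}"
| "wswor x A (Suc m) =
     bind_pmf (wswor x A m) (\<lambda>S. map_pmf (\<lambda>i. insert i S) (wsample x (A - S)))"

definition is_top :: "(nat \<Rightarrow> real) \<Rightarrow> nat set \<Rightarrow> nat \<Rightarrow> nat set \<Rightarrow> bool" where
  "is_top x I m R \<longleftrightarrow> R \<subseteq> I \<and> card R = min m (card I) \<and>
      (\<forall>i\<in>R. \<forall>j\<in>I - R. \<bar>x j\<bar> \<le> \<bar>x i\<bar>)"

definition tail_l1 :: "(nat \<Rightarrow> real) \<Rightarrow> nat set \<Rightarrow> nat \<Rightarrow> real" where
  "tail_l1 x I m = (\<Sum>i\<in>I - (SOME R. is_top x I m R). \<bar>x i\<bar>)"

end

theory Submission
  imports Defs
begin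

text \<open>Write k = 1/\<epsilon>. At most k items of T lie among the k largest, and each of the others
  carries at least a 1/k fraction of the tail mass \<parallel>x_tail(k)\<parallel>_1, so |T| \<le> 2k; hence the 2k
  heaviest items of a sample containing T include T.

  For the probability bound fix i \<in> T. While i is unsampled, consider the potential
  1 + #(items at least as heavy as i not yet sampled), and 0 once i is sampled. Items lighter
  than i weigh at most 2k x_i in total, so a weighted draw picks i or a remaining heavier item
  with probability at least a 1/(4k+2) fraction of the potential; drawing i zeroes the potential
  and drawing a heavier item lowers it by one. The expected potential, which dominates the
  indicator of i being missed, thus shrinks by the factor 1 - 1/(4k+2) per draw, and a union
  bound over the at most 2k items of T finishes the proof.\<close>

lemma is_top_exists:
  assumes "finite I"
  shows "\<exists>R. is_top x I m R"
proof (induction m)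
  case 0
  show ?case by (rule exI[of _ "{}"]) (simp add: is_top_def)
next
  case (Suc m)
  then obtain R where "is_top x I m R" ..
  then have RI: "R \<subseteq> I" and card_R: "card R = min m (card I)"
    and ord: "\<forall>i\<in>R. \<forall>j\<in>I - R. \<bar>x j\<bar> \<le> \<bar>x i\<bar>"
    by (auto simp: is_top_def)
  show ?case
  proof (cases "R = I")
    case True
    then show ?thesis using card_R by (intro exI[of _ R]) (auto simp: is_top_def)
  next
    case False
    let ?rest = "(\<lambda>j. \<bar>x j\<bar>) ` (I - R)"
    have "?rest \<noteq> {}" "finite ?rest" using False RI assms by auto
    then have "Max ?rest \<in> ?rest" by (rule Max_in[rotated])
    then obtain j where j: "j \<in> I - R" "\<bar>x j\<bar> = Max ?rest" by auto
    have j_max: "\<forall>l\<in>I - R. \<bar>x l\<bar> \<le> \<bar>x j\<bar>" using j assms by simp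
    have "card R < card I" using psubset_card_mono[OF assms] False RI by blast
    then have "card (insert j R) = min (Suc m) (card I)"
      using j card_R finite_subset[OF RI assms] by simp
    then show ?thesis
      using RI j j_max ord by (intro exI[of _ "insert j R"]) (auto simp: is_top_def)
  qed
qed

lemma pmf_wsample:
  assumes B: "finite B" "B \<noteq> {}" "\<And>j. j \<in> B \<Longrightarrow> 0 < x j"
  shows "pmf (wsample x B) j = (if j \<in> B then x j / (\<Sum>i\<in>B. x i) else 0)"
proof -
  let ?W = "\<Sum>i\<in>B. x i"
  have W: "0 < ?W" using B by (intro sum_pos) auto
  define f where "f = (\<lambda>i. if i \<in> B then x i / ?W else 0)"
  have f_nonneg: "\<And>i. 0 \<le> f i" using B W by (auto simp: f_def less_imp_le)
  have "(\<integral>\<^sup>+i. ennreal (f i) \<partial>count_space UNIV) = (\<integral>\<^sup>+i. ennreal (x i / ?W) \<partial>count_space B)"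
    by (subst nn_integral_count_space_indicator)
       (auto intro!: nn_integral_cong simp: f_def split: split_indicator)
  also have "\<dots> = ennreal (\<Sum>i\<in>B. x i / ?W)"
    using B W by (simp add: nn_integral_count_space_finite sum_ennreal less_imp_le)
  also have "(\<Sum>i\<in>B. x i / ?W) = 1"
    using W by (simp flip: sum_divide_distrib)
  finally have "pmf (embed_pmf f) j = f j" by (intro pmf_embed_pmf f_nonneg) simp
  then show ?thesis by (simp add: wsample_def f_def)
qed

lemma set_pmf_wsample:
  assumes "finite B" "B \<noteq> {}" "\<And>j. j \<in> B \<Longrightarrow> 0 < x j"
  shows "set_pmf (wsample x B) \<subseteq> B"
  by (auto simp: set_pmf_iff pmf_wsample[OF assms] split: if_splits)

lemma nn_integral_wsample:
  assumes B: "finite B" "B \<noteq> {}" "\<And>j. j \<in> B \<Longrightarrow> 0 < x j" and f: "\<And>j. 0 \<le> f j"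
  shows "(\<integral>\<^sup>+j. ennreal (f j) \<partial>wsample x B) = ennreal ((\<Sum>j\<in>B. f j * x j) / (\<Sum>j\<in>B. x j))"
proof -
  let ?W = "\<Sum>i\<in>B. x i"
  have W: "0 < ?W" using B by (intro sum_pos) auto
  have terms_nonneg: "0 \<le> f j * x j / ?W" if "j \<in> B" for j
    using f[of j] B(3)[OF that] W by simp
  have "(\<integral>\<^sup>+j. ennreal (f j) \<partial>wsample x B) = (\<Sum>j\<in>B. ennreal (f j) * pmf (wsample x B) j)"
    using B set_pmf_wsample[of B x, OF B] by (intro nn_integral_measure_pmf_support) auto
  also have "\<dots> = (\<Sum>j\<in>B. ennreal (f j * x j / ?W))"
  proof (intro sum.cong refl)
    fix j assume "j \<in> B"
    then show "ennreal (f j) * pmf (wsample x B) j = ennreal (f j * x j / ?W)"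
      using f[of j] B(3)[of j] W
      by (simp add: pmf_wsample[of B x, OF B] ennreal_mult[symmetric])
  qed
  also have "\<dots> = ennreal (\<Sum>j\<in>B. f j * x j / ?W)"
    using terms_nonneg by (rule sum_ennreal)
  finally show ?thesis by (simp add: sum_divide_distrib)
qed

lemma wswor_support:
  assumes A: "finite A" "\<And>j. j \<in> A \<Longrightarrow> 0 < x j"
  shows "m \<le> card A \<Longrightarrow> S \<in> set_pmf (wswor x A m) \<Longrightarrow> S \<subseteq> A \<and> card S = m"
proof (induction m arbitrary: S)
  case (Suc m)
  then obtain S' j where S': "S' \<in> set_pmf (wswor x A m)"
    and j: "j \<in> set_pmf (wsample x (A - S'))" and S: "S = insert j S'" by auto
  have IH: "S' \<subseteq> A" "card S' = m" using Suc.IH[OF _ S'] Suc.prems(1) by auto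
  then have "A - S' \<noteq> {}" using Suc.prems(1) card_mono[OF A(1)] by force
  then have "j \<in> A - S'" using set_pmf_wsample[of "A - S'" x] A j by auto
  then show ?case using IH S A(1) finite_subset[OF IH(1) A(1)] by auto
qed simp

lemma wswor_full:
  assumes "finite A" "\<And>j. j \<in> A \<Longrightarrow> 0 < x j" and "S \<in> set_pmf (wswor x A (card A))"
  shows "S = A"
  using wswor_support[OF assms(1,2) order.refl assms(3)] assms(1) card_subset_eq by blast

definition decay_rate :: "nat \<Rightarrow> real" where
  "decay_rate k = 1 / (4 * real k + 2)"

lemma decay_rate_pos: "0 < decay_rate k" and decay_rate_le_half: "decay_rate k \<le> 1 / 2"
  by (auto simp: decay_rate_def field_simps)

lemma decay_rate_mult_le:
  fixes p a g r :: real
  assumes p: "0 \<le> p" "p \<le> 2 * real k" and a: "0 \<le> a" and g: "0 \<le> g" and r: "r \<le> 2 * real k * a"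
  shows "decay_rate k * p * (a + g + r) \<le> p * a + g"
proof -
  let ?\<eta> = "decay_rate k"
  have "?\<eta> * p * (a + r) \<le> ?\<eta> * p * ((2 * real k + 1) * a)"
    using p r decay_rate_pos[of k] by (intro mult_left_mono) (auto simp: algebra_simps)
  also have "\<dots> = p * a / 2" by (simp add: decay_rate_def field_simps)
  finally have "?\<eta> * p * (a + r) \<le> p * a / 2" .
  moreover have "?\<eta> * p \<le> 1 / 2" using p by (simp add: decay_rate_def field_simps)
  then have "?\<eta> * p * g \<le> g / 2" using mult_right_mono[OF _ g] by fastforce
  moreover have "0 \<le> p * a" using p a by simp
  moreover have "?\<eta> * p * (a + g + r) = ?\<eta> * p * (a + r) + ?\<eta> * p * g"
    by (simp add: algebra_simps)
  ultimately show ?thesis using g by linarith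
qed

lemma decay_rate_power_le:
  assumes k: "2 \<le> k" and \<delta>: "0 < \<delta>" "\<delta> < 1 / 2"
    and s: "15 * real k * ln (real k / \<delta>) \<le> real s"
  shows "4 * real k ^ 2 * (1 - decay_rate k) ^ s \<le> \<delta>"
proof -
  let ?\<eta> = "decay_rate k" and ?L = "ln (real k / \<delta>)"
  have L: "0 < ?L" using k \<delta> by simp
  have "(1 - ?\<eta>) ^ s \<le> exp (- ?\<eta>) ^ s"
    using decay_rate_le_half[of k] exp_ge_add_one_self[of "- ?\<eta>"] by (intro power_mono) auto
  also have "\<dots> = exp (- (?\<eta> * real s))"
    by (simp add: exp_of_nat_mult[symmetric] mult.commute)
  also have "\<dots> \<le> exp (- (3 * ?L))"
  proof -
    \<comment> \<open>This is where the constant 15 comes from: 3 (4k + 2) \<le> 15 k for k \<ge> 2.\<close>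
    have "3 * (4 * real k + 2) * ?L \<le> 15 * real k * ?L"
      using k L by (intro mult_right_mono) auto
    then show ?thesis using s by (simp add: decay_rate_def field_simps)
  qed
  also have "\<dots> = (\<delta> / real k) ^ 3"
    using k \<delta> exp_of_nat_mult[of 3 ?L] by (simp add: exp_minus power_divide)
  finally have "4 * real k ^ 2 * (1 - ?\<eta>) ^ s \<le> 4 * real k ^ 2 * (\<delta> / real k) ^ 3"
    by (intro mult_left_mono) auto
  also have "\<dots> = \<delta> * (4 * \<delta> ^ 2 / real k)"
    using k by (simp add: field_simps power2_eq_square power3_eq_cube)
  also have "\<dots> \<le> \<delta>"
  proof -
    have "4 * \<delta> ^ 2 \<le> 1"
      using mult_mono[of \<delta> "1 / 2" \<delta> "1 / 2"] \<delta> by (simp add: power2_eq_square)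
    then have "4 * \<delta> ^ 2 / real k \<le> 1" using k by (simp add: divide_le_eq)
    then show ?thesis using \<delta> by (intro mult_left_le) auto
  qed
  finally show ?thesis .
qed

locale weighted_items =
  fixes x :: "nat \<Rightarrow> real" and I :: "nat set" and k :: nat
  assumes finite_items: "finite I" and weight_pos: "\<And>i. i \<in> I \<Longrightarrow> 0 < x i"
begin

definition largest :: "nat set" where
  "largest = (SOME R. is_top x I k R)"

definition heavy :: "nat set" where
  "heavy = {i \<in> I. tail_l1 x I k \<le> real k * x i}"

lemma weight_nonneg: "i \<in> I \<Longrightarrow> 0 \<le> x i"
  using weight_pos[of i] by simp

lemma is_top_largest: "is_top x I k largest"
  unfolding largest_def using is_top_exists[OF finite_items] by (rule someI_ex)

lemma largest_subset: "largest \<subseteq> I" and card_largest: "card largest \<le> k"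
  using is_top_largest by (auto simp: is_top_def)

lemma finite_largest: "finite largest"
  using largest_subset finite_items by (rule finite_subset)

lemma tail_l1_eq: "tail_l1 x I k = (\<Sum>i\<in>I - largest. x i)"
  unfolding tail_l1_def largest_def[symmetric] by (intro sum.cong) (auto simp: weight_pos abs_of_pos)

lemma heavy_subset: "heavy \<subseteq> I"
  by (auto simp: heavy_def)

lemma finite_heavy: "finite heavy"
  using heavy_subset finite_items by (rule finite_subset)

lemma heavy_upward_closed: "i \<in> heavy \<Longrightarrow> j \<in> I \<Longrightarrow> x i \<le> x j \<Longrightarrow> j \<in> heavy"
  unfolding heavy_def using mult_left_mono[of "x i" "x j" "real k"] by auto

lemma card_heavy_diff_largest: "card (heavy - largest) \<le> k"
proof (cases "heavy - largest = {}")
  case False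
  then obtain u where u: "u \<in> heavy - largest" by blast
  have "real (card (heavy - largest)) * tail_l1 x I k \<le> (\<Sum>v\<in>heavy - largest. real k * x v)"
    by (intro sum_bounded_below) (auto simp: heavy_def)
  also have "\<dots> = real k * (\<Sum>v\<in>heavy - largest. x v)"
    by (simp add: sum_distrib_left)
  also have "\<dots> \<le> real k * tail_l1 x I k"
    unfolding tail_l1_eq using heavy_subset finite_items weight_nonneg
    by (intro mult_left_mono sum_mono2) auto
  finally have "real (card (heavy - largest)) * tail_l1 x I k \<le> real k * tail_l1 x I k" .
  moreover have "0 < tail_l1 x I k"
    unfolding tail_l1_eq using u heavy_subset finite_items weight_pos weight_nonneg
    by (intro sum_pos2[of _ u]) auto
  ultimately show ?thesis by (simp add: mult_right_le_imp_le)
qed (metis card.empty zero_le)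

lemma card_heavy: "card heavy \<le> 2 * k"
proof -
  have "card heavy \<le> card (heavy \<inter> largest) + card (heavy - largest)"
    by (metis Int_Diff_Un card_Un_le)
  also have "card (heavy \<inter> largest) \<le> k"
    using card_mono[OF finite_largest, of "heavy \<inter> largest"] card_largest by simp
  finally show ?thesis using card_heavy_diff_largest by simp
qed

lemma heavy_subset_top:
  assumes S: "S \<subseteq> I" "heavy \<subseteq> S" and R: "is_top x S (min (card S) (2 * k)) R"
  shows "heavy \<subseteq> R"
proof
  fix i assume i: "i \<in> heavy"
  from R have RS: "R \<subseteq> S" and card_R: "card R = min (card S) (2 * k)"
    and ord: "\<forall>a\<in>R. \<forall>b\<in>S - R. \<bar>x b\<bar> \<le> \<bar>x a\<bar>"
    by (auto simp: is_top_def)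
  have iS: "i \<in> S" using i S(2) by blast
  have fin_S: "finite S" using S(1) finite_items by (rule finite_subset)
  show "i \<in> R"
  proof (rule ccontr)
    assume iR: "i \<notin> R"
    then have "card R < card S" using iS RS fin_S psubset_card_mono by blast
    then have "card (insert i R) = 2 * k + 1"
      using card_R iR finite_subset[OF RS fin_S] by simp
    moreover have "insert i R \<subseteq> heavy"
    proof
      fix u assume u: "u \<in> insert i R"
      have "x i \<le> x u"
      proof (cases "u = i")
        case False
        then have "u \<in> R" using u by simp
        then have "\<bar>x i\<bar> \<le> \<bar>x u\<bar>" using ord iS iR by blast
        moreover have "u \<in> I" "i \<in> I" using \<open>u \<in> R\<close> RS iS S(1) by auto
        ultimately show ?thesis using weight_pos[of u] weight_pos[of i] by simp
      qed simp
      then show "u \<in> heavy" using i u RS S(1) heavy_upward_closed by blast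
    qed
    then have "card (insert i R) \<le> 2 * k"
      using card_mono[OF finite_heavy] card_heavy le_trans by blast
    ultimately show False by simp
  qed
qed

lemma sum_lighter_le:
  assumes i: "i \<in> heavy" and A: "A \<subseteq> I" "\<And>j. j \<in> A \<Longrightarrow> x j < x i"
  shows "(\<Sum>j\<in>A. x j) \<le> 2 * real k * x i"
proof -
  have fin_A: "finite A" using A(1) finite_items by (rule finite_subset)
  have "(\<Sum>j\<in>A \<inter> largest. x j) \<le> real (card (A \<inter> largest)) * x i"
    using A(2) by (intro sum_bounded_above) (simp add: less_imp_le)
  also have "\<dots> \<le> real k * x i"
    using card_mono[OF finite_largest, of "A \<inter> largest"] card_largest i heavy_subset weight_pos
    by (intro mult_right_mono) (auto simp: less_imp_le)
  finally have "(\<Sum>j\<in>A \<inter> largest. x j) \<le> real k * x i" .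
  moreover have "(\<Sum>j\<in>A - largest. x j) \<le> tail_l1 x I k"
    unfolding tail_l1_eq using A(1) finite_items weight_nonneg by (intro sum_mono2) auto
  moreover have "tail_l1 x I k \<le> real k * x i" using i by (simp add: heavy_def)
  ultimately show ?thesis using sum.Int_Diff[OF fin_A, of x largest] by simp
qed

definition heavier :: "nat \<Rightarrow> nat set" where
  "heavier i = {j \<in> I. j \<noteq> i \<and> x i \<le> x j}"

definition potential :: "nat \<Rightarrow> nat set \<Rightarrow> real" where
  "potential i S = (if i \<in> S then 0 else real (card (heavier i - S)) + 1)"

lemma finite_heavier: "finite (heavier i)"
  using finite_items by (simp add: heavier_def)

lemma card_heavier: "i \<in> heavy \<Longrightarrow> card (heavier i) + 1 \<le> 2 * k"
proof -
  assume i: "i \<in> heavy"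
  have "insert i (heavier i) \<subseteq> heavy"
    using i heavy_upward_closed by (auto simp: heavier_def)
  then have "card (insert i (heavier i)) \<le> card heavy"
    by (rule card_mono[OF finite_heavy])
  then show ?thesis using card_heavy finite_heavier by (simp add: heavier_def)
qed

lemma potential_nonneg: "0 \<le> potential i S"
  by (simp add: potential_def)

lemma potential_le: "i \<in> heavy \<Longrightarrow> potential i S \<le> 2 * real k"
  using card_heavier[of i] card_mono[OF finite_heavier, of "heavier i - S" i]
  by (auto simp: potential_def)

lemma potential_insert:
  assumes "i \<notin> S" "j \<notin> S"
  shows "potential i (insert j S) =
    (if j = i then 0 else if j \<in> heavier i then potential i S - 1 else potential i S)"
proof -
  have "heavier i - insert j S = heavier i - S - {j}" by blast
  moreover have "card (heavier i - S) \<ge> 1" if "j \<in> heavier i"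
    using that assms(2) finite_heavier card_0_eq[of "heavier i - S"] by fastforce
  ultimately show ?thesis using assms finite_heavier by (auto simp: potential_def of_nat_diff)
qed

lemma weighted_potential_after_draw:
  assumes i: "i \<in> heavy" "i \<notin> S"
  shows "(\<Sum>j\<in>I - S. potential i (insert j S) * x j)
    \<le> (1 - decay_rate k) * potential i S * (\<Sum>j\<in>I - S. x j)"
proof -
  let ?B = "I - S" and ?p = "potential i S" and ?G = "heavier i"
  define g where "g = (\<Sum>j\<in>?B \<inter> ?G. x j)"
  define r where "r = (\<Sum>j\<in>?B - ?G - {i}. x j)"
  have iB: "i \<in> ?B" and iG: "i \<notin> ?G" using i heavy_subset by (auto simp: heavier_def)
  have fin_B: "finite ?B" using finite_items by simp
  have "(\<Sum>j\<in>?B. potential i (insert j S) * x j)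
      = (\<Sum>j\<in>?B. ?p * x j - (if j = i then ?p * x i else 0) - (if j \<in> ?G then x j else 0))"
    using i(2) iG by (intro sum.cong refl) (auto simp: potential_insert algebra_simps)
  also have "\<dots> = ?p * (\<Sum>j\<in>?B. x j) - ?p * x i - g"
    using fin_B iB
    by (simp add: sum_subtractf sum_distrib_left g_def sum.inter_restrict[symmetric] Int_commute)
  also have "\<dots> \<le> (1 - decay_rate k) * ?p * (\<Sum>j\<in>?B. x j)"
  proof -
    have "(\<Sum>j\<in>?B. x j) = g + (x i + r)"
      unfolding g_def r_def using fin_B iB iG
      by (simp add: sum.Int_Diff[OF fin_B, of _ ?G] sum.remove[of "?B - ?G" i])
    moreover have "r \<le> 2 * real k * x i"
      unfolding r_def using i(1) by (rule sum_lighter_le) (auto simp: heavier_def)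
    moreover have "0 \<le> g" unfolding g_def using weight_nonneg by (intro sum_nonneg) auto
    ultimately have "decay_rate k * ?p * (\<Sum>j\<in>?B. x j) \<le> ?p * x i + g"
      using decay_rate_mult_le[of ?p k "x i" g r] potential_nonneg potential_le[OF i(1)]
        weight_nonneg heavy_subset i(1)
      by (auto simp: algebra_simps)
    then show ?thesis by (simp add: algebra_simps)
  qed
  finally show ?thesis .
qed

lemma expected_potential_after_draw:
  assumes "i \<in> heavy"
  shows "(\<integral>\<^sup>+j. ennreal (potential i (insert j S)) \<partial>wsample x (I - S))
    \<le> ennreal ((1 - decay_rate k) * potential i S)"
proof (cases "i \<in> S")
  case True
  then show ?thesis by (simp add: potential_def)
next
  case False
  have B: "finite (I - S)" "I - S \<noteq> {}" "\<And>j. j \<in> I - S \<Longrightarrow> 0 < x j"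
    using finite_items assms False heavy_subset weight_pos by auto
  have "0 < (\<Sum>j\<in>I - S. x j)" using B by (intro sum_pos) auto
  then have "(\<Sum>j\<in>I - S. potential i (insert j S) * x j) / (\<Sum>j\<in>I - S. x j)
      \<le> (1 - decay_rate k) * potential i S"
    using weighted_potential_after_draw[OF assms False] by (simp add: pos_divide_le_eq)
  moreover have "(\<integral>\<^sup>+j. ennreal (potential i (insert j S)) \<partial>wsample x (I - S))
      = ennreal ((\<Sum>j\<in>I - S. potential i (insert j S) * x j) / (\<Sum>j\<in>I - S. x j))"
    using B potential_nonneg by (intro nn_integral_wsample)
  ultimately show ?thesis by (simp add: ennreal_leI)
qed

lemma expected_potential_wswor:
  assumes "i \<in> heavy"
  shows "(\<integral>\<^sup>+S. ennreal (potential i S) \<partial>wswor x I m) \<le> ennreal ((1 - decay_rate k) ^ m * potential i {})"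
proof (induction m)
  case 0
  show ?case by (simp add: potential_nonneg)
next
  case (Suc m)
  have \<eta>: "0 \<le> 1 - decay_rate k" using decay_rate_le_half[of k] by simp
  have "(\<integral>\<^sup>+S. ennreal (potential i S) \<partial>wswor x I (Suc m))
      = (\<integral>\<^sup>+S. (\<integral>\<^sup>+j. ennreal (potential i (insert j S)) \<partial>wsample x (I - S)) \<partial>wswor x I m)"
    by simp
  also have "\<dots> \<le> (\<integral>\<^sup>+S. ennreal (1 - decay_rate k) * ennreal (potential i S) \<partial>wswor x I m)"
    using expected_potential_after_draw[OF assms] \<eta> potential_nonneg
    by (intro nn_integral_mono) (simp add: ennreal_mult)
  also have "\<dots> = ennreal (1 - decay_rate k) * (\<integral>\<^sup>+S. ennreal (potential i S) \<partial>wswor x I m)"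
    by (rule nn_integral_cmult) simp
  also have "\<dots> \<le> ennreal (1 - decay_rate k) * ennreal ((1 - decay_rate k) ^ m * potential i {})"
    by (intro mult_left_mono Suc.IH) simp
  also have "\<dots> = ennreal ((1 - decay_rate k) ^ Suc m * potential i {})"
    using \<eta> potential_nonneg by (simp add: ennreal_mult[symmetric] mult.assoc)
  finally show ?case .
qed

lemma prob_missing_le:
  assumes "i \<in> heavy"
  shows "measure_pmf.prob (wswor x I m) {S. i \<notin> S} \<le> 2 * real k * (1 - decay_rate k) ^ m"
proof -
  have \<eta>: "0 \<le> 1 - decay_rate k" using decay_rate_le_half[of k] by simp
  have "ennreal (measure_pmf.prob (wswor x I m) {S. i \<notin> S}) = (\<integral>\<^sup>+S. indicator {S. i \<notin> S} S \<partial>wswor x I m)"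
    by (simp add: measure_pmf.emeasure_eq_measure[symmetric])
  also have "\<dots> \<le> (\<integral>\<^sup>+S. ennreal (potential i S) \<partial>wswor x I m)"
    by (intro nn_integral_mono) (auto simp: potential_def split: split_indicator)
  also have "\<dots> \<le> ennreal ((1 - decay_rate k) ^ m * potential i {})"
    using assms by (rule expected_potential_wswor)
  also have "\<dots> \<le> ennreal ((1 - decay_rate k) ^ m * (2 * real k))"
    using potential_le[OF assms, of "{}"] \<eta> by (intro ennreal_leI mult_left_mono) simp_all
  finally show ?thesis using \<eta> by (simp add: ennreal_le_iff mult.commute)
qed

lemma prob_heavy_sampled:
  assumes "2 \<le> k" "0 < \<delta>" "\<delta> < 1 / 2" "15 * real k * ln (real k / \<delta>) \<le> real s"
  shows "1 - \<delta> \<le> measure_pmf.prob (wswor x I (min (card I) s)) {S. heavy \<subseteq> S}"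
proof -
  let ?P = "wswor x I (min (card I) s)"
  have "measure_pmf.prob ?P {S. \<not> heavy \<subseteq> S} \<le> \<delta>"
  proof (cases "card I \<le> s")
    case True
    then have "heavy \<subseteq> S" if "S \<in> set_pmf ?P" for S
      using wswor_full[of I x S, OF finite_items weight_pos] that heavy_subset by simp
    then have "measure_pmf.prob ?P {S. \<not> heavy \<subseteq> S} = 0"
      by (auto simp: measure_pmf_zero_iff)
    then show ?thesis using assms by simp
  next
    case False
    have "{S. \<not> heavy \<subseteq> S} = (\<Union>i\<in>heavy. {S. i \<notin> S})" by blast
    then have "measure_pmf.prob ?P {S. \<not> heavy \<subseteq> S} \<le> (\<Sum>i\<in>heavy. measure_pmf.prob ?P {S. i \<notin> S})"
      using finite_heavy by (simp add: measure_pmf.finite_measure_subadditive_finite)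
    also have "\<dots> \<le> (\<Sum>i\<in>heavy. 2 * real k * (1 - decay_rate k) ^ s)"
      using False prob_missing_le by (intro sum_mono) simp
    also have "\<dots> = real (card heavy) * (2 * real k * (1 - decay_rate k) ^ s)"
      by simp
    also have "\<dots> \<le> 2 * real k * (2 * real k * (1 - decay_rate k) ^ s)"
      using card_heavy decay_rate_le_half[of k] by (intro mult_right_mono) auto
    also have "\<dots> \<le> \<delta>"
      using decay_rate_power_le[OF assms] by (simp add: power2_eq_square mult_ac)
    finally show ?thesis .
  qed
  moreover have "measure_pmf.prob ?P {S. heavy \<subseteq> S} = 1 - measure_pmf.prob ?P {S. \<not> heavy \<subseteq> S}"
    using measure_pmf.prob_compl[of "{S. \<not> heavy \<subseteq> S}" ?P] by (simp add: Compl_eq_Diff_UNIV[symmetric] Collect_neg_eq[symmetric])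
  ultimately show ?thesis by linarith
qed

end

theorem mainTheorem6:
  shows "\<exists>C::real > 0. \<forall>(\<epsilon>::real) (k::nat) (\<delta>::real) (s::nat) (t::nat) (x::nat \<Rightarrow> real).
    0 < \<epsilon> \<and> \<epsilon> \<le> 1/2 \<and> real k = 1 / \<epsilon> \<and> 0 < \<delta> \<and> \<delta> < 1/2 \<and>
    real s \<ge> C / \<epsilon> * ln (1 / (\<epsilon> * \<delta>)) \<and> t \<ge> 1 \<and> (\<forall>i\<in>{1..t}. x i > 0)
    \<longrightarrow>
    (let T = {i\<in>{1..t}. x i \<ge> \<epsilon> * tail_l1 x {1..t} k};
         P = wswor x {1..t} (min t s)
     in real (card T) \<le> 2 / \<epsilon>
      \<and> measure_pmf.prob P {S. T \<subseteq> S} \<ge> 1 - \<delta>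
      \<and> (\<forall>S\<in>set_pmf P. T \<subseteq> S \<longrightarrow>
            (\<forall>R. is_top x S (min (card S) (2 * k)) R \<longrightarrow> T \<subseteq> R)))"
proof (rule exI[of _ 15], intro conjI allI impI)
  fix \<epsilon> \<delta> :: real and k s t :: nat and x :: "nat \<Rightarrow> real"
  assume H: "0 < \<epsilon> \<and> \<epsilon> \<le> 1/2 \<and> real k = 1 / \<epsilon> \<and> 0 < \<delta> \<and> \<delta> < 1/2 \<and>
    real s \<ge> 15 / \<epsilon> * ln (1 / (\<epsilon> * \<delta>)) \<and> t \<ge> 1 \<and> (\<forall>i\<in>{1..t}. x i > 0)"
  then have \<epsilon>_pos: "0 < \<epsilon>" and \<epsilon>_le: "\<epsilon> \<le> 1 / 2" and k_\<epsilon>: "real k = 1 / \<epsilon>"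
    and \<delta>: "0 < \<delta>" "\<delta> < 1 / 2" and s_\<epsilon>: "15 / \<epsilon> * ln (1 / (\<epsilon> * \<delta>)) \<le> real s"
    and pos: "\<forall>i\<in>{1..t}. 0 < x i"
    by blast+
  have \<epsilon>: "\<epsilon> = 1 / real k" by (simp add: k_\<epsilon>)
  have s: "15 * real k * ln (real k / \<delta>) \<le> real s" using s_\<epsilon> by (simp add: \<epsilon>)
  have "2 \<le> real k" unfolding k_\<epsilon> using \<epsilon>_pos \<epsilon>_le by (simp add: field_simps)
  then have k: "2 \<le> k" by simp
  interpret weighted_items x "{1..t}" k
    using pos by unfold_locales auto
  have T: "{i\<in>{1..t}. \<epsilon> * tail_l1 x {1..t} k \<le> x i} = heavy"
    unfolding heavy_def \<epsilon> using k by (intro Collect_cong) (simp add: pos_divide_le_eq mult.commute)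
  have prob: "1 - \<delta> \<le> measure_pmf.prob (wswor x {1..t} (min t s)) {S. heavy \<subseteq> S}"
    using prob_heavy_sampled[OF k \<delta> s] by simp
  have support: "S \<subseteq> {1..t}" if "S \<in> set_pmf (wswor x {1..t} (min t s))" for S
    using wswor_support[of "{1..t}" x "min t s" S, OF finite_items weight_pos _ that] by simp
  show "let T = {i\<in>{1..t}. x i \<ge> \<epsilon> * tail_l1 x {1..t} k}; P = wswor x {1..t} (min t s)
     in real (card T) \<le> 2 / \<epsilon> \<and> measure_pmf.prob P {S. T \<subseteq> S} \<ge> 1 - \<delta>
      \<and> (\<forall>S\<in>set_pmf P. T \<subseteq> S \<longrightarrow> (\<forall>R. is_top x S (min (card S) (2 * k)) R \<longrightarrow> T \<subseteq> R))"
    unfolding Let_def T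
  proof (intro conjI prob ballI impI allI)
    show "real (card heavy) \<le> 2 / \<epsilon>" using card_heavy by (simp add: \<epsilon>)
    fix S R assume S: "S \<in> set_pmf (wswor x {1..t} (min t s))" "heavy \<subseteq> S"
      and R: "is_top x S (min (card S) (2 * k)) R"
    show "heavy \<subseteq> R" using heavy_subset_top[OF support[OF S(1)] S(2) R] .
  qed
qed simp

end
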